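(* For every $n\ge1$ and every $A\subseteq[n]$, the set-alternating domain $D_X(A)$ is a copious peak-pit domain and is a maximal Condorcet domain on $[n]$.
   Context: Alternatives are $X=[n]$, with societal axis $1<\dots<n$; linear orders are written as strings, leftmost ranked highest. For $A\subseteq[n]$, $D_X(A)$ is the set of all linear orders $q$ on $[n]$ such that for every triple $i<j<k$: if $j\in A$ then $i$ is not ranked last among $\{i,j,k\}$ in $q$ ($1N3$), and if $j\notin A$ then $k$ is not ranked first among $\{i,j,k\}$ in $q$ ($3N1$). A domain is a set of linear orders on $[n]$. A Condorcet domain is a domain $D$ such that for every profile with an odd number of voters whose preferences all lie in $D$, the pairwise majority relation is transitive. It is maximal if no Condorcet domain on $[n]$ strictly contains it. A domain is copious if its restriction to every triple of alternatives contains exactly 4 distinct orders. For a triple $a<b<c$, call them the 1st, 2nd, 3rd alternative; the never condition $xNp$ ($x,p\in\{1,2,3\}$) says the $x$-th alternative of the triple is never in position $p$ within the triple. A domain is peak-pit if for every triple its restriction satisfies some never condition of the form $xN3$ or $xN1$. *)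

theory Defs
  imports Main
begin

text \<open>Linear orders on [n] = {1..n} are lists (leftmost = ranked highest) that
  enumerate {1..n} without repetition.\<close>
definition lin_orders :: "nat \<Rightarrow> nat list set" where
  "lin_orders n = {q. distinct q \<and> set q = {1..n}}"

definition prefers :: "nat list \<Rightarrow> nat \<Rightarrow> nat \<Rightarrow> bool" where
  "prefers q a b \<longleftrightarrow> (\<exists>i j. i < j \<and> j < length q \<and> q ! i = a \<and> q ! j = b)"

definition maj :: "nat list list \<Rightarrow> nat \<Rightarrow> nat \<Rightarrow> bool" where
  "maj P a b \<longleftrightarrow> 2 * length (filter (\<lambda>q. prefers q a b) P) > length P"

definition condorcet_domain :: "nat \<Rightarrow> nat list set \<Rightarrow> bool" where
  "condorcet_domain n D \<longleftrightarrow> D \<subseteq> lin_orders n \<and>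
     (\<forall>P. odd (length P) \<and> set P \<subseteq> D \<longrightarrow>
        (\<forall>a\<in>{1..n}. \<forall>b\<in>{1..n}. \<forall>c\<in>{1..n}. maj P a b \<and> maj P b c \<longrightarrow> maj P a c))"

definition maximal_condorcet_domain :: "nat \<Rightarrow> nat list set \<Rightarrow> bool" where
  "maximal_condorcet_domain n D \<longleftrightarrow> condorcet_domain n D \<and>
     (\<forall>D'. condorcet_domain n D' \<and> D \<subseteq> D' \<longrightarrow> D' = D)"

definition restr :: "nat list \<Rightarrow> nat set \<Rightarrow> nat list" where
  "restr q T = filter (\<lambda>x. x \<in> T) q"

definition copious :: "nat \<Rightarrow> nat list set \<Rightarrow> bool" where
  "copious n D \<longleftrightarrow> (\<forall>a b c. 1 \<le> a \<and> a < b \<and> b < c \<and> c \<le> n \<longrightarrow>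
     card ((\<lambda>q. restr q {a, b, c}) ` D) = 4)"

text \<open>Never condition xNp on the triple a<b<c: the x-th alternative of the triple
  is never in position p (1-based) within the restricted order.\<close>
definition never_cond :: "nat list set \<Rightarrow> nat \<Rightarrow> nat \<Rightarrow> nat \<Rightarrow> nat \<Rightarrow> nat \<Rightarrow> bool" where
  "never_cond D a b c x p \<longleftrightarrow>
     (\<forall>q\<in>D. restr q {a, b, c} ! (p - 1) \<noteq> [a, b, c] ! (x - 1))"

definition peak_pit :: "nat \<Rightarrow> nat list set \<Rightarrow> bool" where
  "peak_pit n D \<longleftrightarrow> (\<forall>a b c. 1 \<le> a \<and> a < b \<and> b < c \<and> c \<le> n \<longrightarrow>
     (\<exists>x\<in>{1, 2, 3}. \<exists>p\<in>{1, 3}. never_cond D a b c x p))"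

definition DX :: "nat \<Rightarrow> nat set \<Rightarrow> nat list set" where
  "DX n A = {q \<in> lin_orders n. \<forall>i j k. 1 \<le> i \<and> i < j \<and> j < k \<and> k \<le> n \<longrightarrow>
     (j \<in> A \<longrightarrow> \<not> (prefers q j i \<and> prefers q k i)) \<and>
     (j \<notin> A \<longrightarrow> \<not> (prefers q k i \<and> prefers q k j))}"

end

theory Submission
  imports Defs "HOL-Library.Product_Lexorder"
begin

(* On a triple a < b < c the orders of D_X(A) show exactly the four patterns abc, acb, bac and
   cab (if b \<in> A) resp. bca (if b \<notin> A): the other two patterns are the forbidden ones, and all
   four are realized by the natural order and by orders that move c to just before a.  This gives
   copiousness and the never conditions 1N3 resp. 3N1.  A domain of linear orders is Condorcet iff
   no three of its orders rank some triple in its three cyclic rotations; the four patterns above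
   never contain a full cyclic class, so D_X(A) is Condorcet.  Conversely, an order outside D_X(A)
   shows a forbidden pattern on some triple, and two of the witness orders complete it to a cyclic
   triple, so D_X(A) is maximal. *)

lemma prefers_Nil [simp]: "\<not> prefers [] x y"
  by (simp add: prefers_def)

lemma prefers_Cons: "prefers (a # q) x y \<longleftrightarrow> x = a \<and> y \<in> set q \<or> prefers q x y"
proof
  assume "prefers (a # q) x y"
  then obtain i j where ij: "i < j" "j < Suc (length q)" "(a # q) ! i = x" "(a # q) ! j = y"
    unfolding prefers_def by auto
  then obtain j' where j: "j = Suc j'" by (cases j) auto
  show "x = a \<and> y \<in> set q \<or> prefers q x y"
  proof (cases i)
    case 0
    then show ?thesis using ij j by auto
  next
    case (Suc i')
    then show ?thesis using ij j unfolding prefers_def by auto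
  qed
next
  assume "x = a \<and> y \<in> set q \<or> prefers q x y"
  then show "prefers (a # q) x y"
  proof
    assume "x = a \<and> y \<in> set q"
    then obtain j where "j < length q" "q ! j = y" "x = a" by (auto simp: in_set_conv_nth)
    then show ?thesis unfolding prefers_def by (intro exI[of _ 0] exI[of _ "Suc j"]) auto
  next
    assume "prefers q x y"
    then obtain i j where "i < j" "j < length q" "q ! i = x" "q ! j = y"
      unfolding prefers_def by blast
    then show ?thesis unfolding prefers_def by (intro exI[of _ "Suc i"] exI[of _ "Suc j"]) auto
  qed
qed

lemma prefers_set: "prefers q x y \<Longrightarrow> x \<in> set q \<and> y \<in> set q"
  by (induction q) (auto simp: prefers_Cons)

lemma prefers_asym: "distinct q \<Longrightarrow> prefers q x y \<Longrightarrow> \<not> prefers q y x"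
  by (induction q) (auto simp: prefers_Cons dest: prefers_set)

lemma prefers_trans: "distinct q \<Longrightarrow> prefers q x y \<Longrightarrow> prefers q y z \<Longrightarrow> prefers q x z"
  by (induction q) (auto simp: prefers_Cons dest: prefers_set)

lemma prefers_total: "x \<in> set q \<Longrightarrow> y \<in> set q \<Longrightarrow> x \<noteq> y \<Longrightarrow> prefers q x y \<or> prefers q y x"
  by (induction q) (auto simp: prefers_Cons)

lemma sorted_wrt_prefers: "sorted_wrt (prefers q) q"
  by (auto simp: sorted_wrt_iff_nth_less prefers_def)

lemma sorted_wrt_asym_unique:
  assumes "sorted_wrt R xs" "sorted_wrt R ys" "set xs = set ys" "\<And>x y. R x y \<Longrightarrow> \<not> R y x"
  shows "xs = ys"
  using assms(1-3)
proof (induction xs arbitrary: ys)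
  case Nil
  then show ?case by simp
next
  case (Cons x xs)
  then obtain y ys' where ys: "ys = y # ys'" by (cases ys) auto
  have "x = y"
  proof (rule ccontr)
    assume "x \<noteq> y"
    then have "R x y" "R y x"
      using Cons.prems unfolding ys by (auto simp: set_eq_iff)
    then show False
      using assms(4) by blast
  qed
  moreover have "x \<notin> set xs" "y \<notin> set ys'"
    using Cons.prems assms(4)[of x x] assms(4)[of y y] unfolding ys by auto
  ultimately have "set xs = set ys'"
    using Cons.prems(3) unfolding ys by (simp add: insert_ident)
  then show ?case
    using Cons \<open>x = y\<close> unfolding ys by simp
qed

lemma set_restr: "set (restr q T) = set q \<inter> T"
  by (auto simp: restr_def)

lemma restr_sorted_eq:
  assumes "distinct q" "sorted_wrt (prefers q) l" "set l \<subseteq> set q"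
  shows "restr q (set l) = l"
proof (rule sorted_wrt_asym_unique)
  show "sorted_wrt (prefers q) (restr q (set l))"
    by (simp add: restr_def sorted_wrt_filter sorted_wrt_prefers)
  show "set (restr q (set l)) = set l"
    using assms(3) by (auto simp: set_restr)
qed (use assms prefers_asym in auto)

lemma triple_permutations:
  assumes "distinct l" "set l = {a, b, c}" "distinct [a, b, c]"
  shows "l \<in> {[a,b,c], [a,c,b], [b,a,c], [b,c,a], [c,a,b], [c,b,a]}"
proof -
  have "length l = 3"
    using assms distinct_card by fastforce
  then obtain x y z where "l = [x, y, z]"
    by (auto simp: numeral_3_eq_3 length_Suc_conv)
  moreover have "x \<in> {a, b, c}" "y \<in> {a, b, c}" "z \<in> {a, b, c}" "distinct [x, y, z]"
    using assms(1,2) calculation by auto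
  ultimately show ?thesis
    using assms(3) by auto
qed

lemma length_filter_conj_ge:
  "length (filter P xs) + length (filter Q xs) \<le> length xs + length (filter (\<lambda>x. P x \<and> Q x) xs)"
  by (induction xs) auto

lemma maj_common_voter:
  assumes "maj P a b" "maj P c d"
  shows "\<exists>q\<in>set P. prefers q a b \<and> prefers q c d"
proof -
  have "filter (\<lambda>q. prefers q a b \<and> prefers q c d) P \<noteq> []"
    using assms length_filter_conj_ge[of "\<lambda>q. prefers q a b" P "\<lambda>q. prefers q c d"]
    unfolding maj_def by auto
  then show ?thesis
    by (auto simp: filter_empty_conv)
qed

lemma maj_complete:
  assumes "set P \<subseteq> lin_orders n" "odd (length P)" "a \<in> {1..n}" "c \<in> {1..n}" "a \<noteq> c"
    and "\<not> maj P a c"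
  shows "maj P c a"
proof -
  have "filter (\<lambda>q. prefers q c a) P = filter (\<lambda>q. \<not> prefers q a c) P"
  proof (rule filter_cong[OF refl])
    fix q assume "q \<in> set P"
    then have "distinct q" "a \<in> set q" "c \<in> set q"
      using assms(1,3,4) by (auto simp: lin_orders_def)
    then show "prefers q c a \<longleftrightarrow> \<not> prefers q a c"
      using prefers_total prefers_asym assms(5) by metis
  qed
  then show ?thesis
    using assms(2,6) sum_length_filter_compl[of "\<lambda>q. prefers q a c" P]
    unfolding maj_def by presburger
qed

definition has_cyclic_triple :: "nat \<Rightarrow> nat list set \<Rightarrow> bool" where
  "has_cyclic_triple n D \<longleftrightarrow>
     (\<exists>v1\<in>D. \<exists>v2\<in>D. \<exists>v3\<in>D. \<exists>a\<in>{1..n}. \<exists>b\<in>{1..n}. \<exists>c\<in>{1..n}.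
        sorted_wrt (prefers v1) [a, b, c] \<and> sorted_wrt (prefers v2) [b, c, a] \<and>
        sorted_wrt (prefers v3) [c, a, b])"

lemma condorcet_domain_no_cyclic_triple:
  assumes cd: "condorcet_domain n D"
  shows "\<not> has_cyclic_triple n D"
proof
  assume "has_cyclic_triple n D"
  then obtain v1 v2 v3 a b c where v: "v1 \<in> D" "v2 \<in> D" "v3 \<in> D"
    and abc: "a \<in> {1..n}" "b \<in> {1..n}" "c \<in> {1..n}"
    and cyc: "sorted_wrt (prefers v1) [a, b, c]" "sorted_wrt (prefers v2) [b, c, a]"
      "sorted_wrt (prefers v3) [c, a, b]"
    unfolding has_cyclic_triple_def by blast
  have "distinct v1" "distinct v2" "distinct v3"
    using v cd by (auto simp: condorcet_domain_def lin_orders_def)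
  then have "maj [v1, v2, v3] a b" "maj [v1, v2, v3] b c" "\<not> maj [v1, v2, v3] a c"
    using cyc by (auto simp: maj_def dest: prefers_asym)
  moreover have "odd (length [v1, v2, v3]) \<and> set [v1, v2, v3] \<subseteq> D"
    using v by simp
  ultimately show False
    using cd abc unfolding condorcet_domain_def by blast
qed

lemma condorcet_domainI_no_cyclic_triple:
  assumes lin: "D \<subseteq> lin_orders n" and acyclic: "\<not> has_cyclic_triple n D"
  shows "condorcet_domain n D"
  unfolding condorcet_domain_def
proof (intro conjI lin allI impI ballI)
  fix P a b c
  assume P: "odd (length P) \<and> set P \<subseteq> D" and abc: "a \<in> {1..n}" "b \<in> {1..n}" "c \<in> {1..n}"
    and ab_bc: "maj P a b \<and> maj P b c"
  have distinct: "distinct q" if "q \<in> set P" for q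
    using that P lin by (auto simp: lin_orders_def)
  show "maj P a c"
  proof (rule ccontr)
    assume "\<not> maj P a c"
    moreover have "a \<noteq> c"
      using maj_common_voter[of P a b b a] ab_bc distinct prefers_asym by blast
    ultimately have ca: "maj P c a"
      using maj_complete[of P n a c] P lin abc by blast
    obtain v1 where v1: "v1 \<in> set P" "prefers v1 a b" "prefers v1 b c"
      using maj_common_voter ab_bc by blast
    obtain v2 where v2: "v2 \<in> set P" "prefers v2 b c" "prefers v2 c a"
      using maj_common_voter ab_bc ca by blast
    obtain v3 where v3: "v3 \<in> set P" "prefers v3 c a" "prefers v3 a b"
      using maj_common_voter ab_bc ca by blast
    have "sorted_wrt (prefers v1) [a, b, c]" "sorted_wrt (prefers v2) [b, c, a]"
      "sorted_wrt (prefers v3) [c, a, b]"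
      using v1 v2 v3 prefers_trans[OF distinct[OF v1(1)] v1(2,3)]
        prefers_trans[OF distinct[OF v2(1)] v2(2,3)] prefers_trans[OF distinct[OF v3(1)] v3(2,3)]
      by simp_all
    then have "has_cyclic_triple n D"
      unfolding has_cyclic_triple_def using P abc v1(1) v2(1) v3(1) by blast
    then show False
      using acyclic by blast
  qed
qed

lemma condorcet_domain_iff_no_cyclic_triple:
  "condorcet_domain n D \<longleftrightarrow> D \<subseteq> lin_orders n \<and> \<not> has_cyclic_triple n D"
proof
  assume cd: "condorcet_domain n D"
  then have "D \<subseteq> lin_orders n"
    unfolding condorcet_domain_def by blast
  then show "D \<subseteq> lin_orders n \<and> \<not> has_cyclic_triple n D"
    using condorcet_domain_no_cyclic_triple[OF cd] by blast
qed (use condorcet_domainI_no_cyclic_triple in blast)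

lemma prefers_sorted_key:
  fixes f :: "nat \<Rightarrow> 'k::linorder"
  assumes "sorted_wrt (\<lambda>x y. f x < f y) q" "x \<in> set q" "y \<in> set q"
  shows "prefers q x y \<longleftrightarrow> f x < f y"
  using assms
proof (induction q)
  case (Cons a q)
  then show ?case
    by (auto simp: prefers_Cons dest: prefers_set)
qed simp

definition order_by :: "(nat \<Rightarrow> 'k::linorder) \<Rightarrow> nat \<Rightarrow> nat list" where
  "order_by f n = sort_key f [1..<Suc n]"

lemma order_by_in_lin_orders: "order_by f n \<in> lin_orders n"
  by (auto simp: order_by_def lin_orders_def)

lemma prefers_order_by:
  assumes "inj_on f {1..n}" "x \<in> {1..n}" "y \<in> {1..n}"
  shows "prefers (order_by f n) x y \<longleftrightarrow> f x < f y"
proof (rule prefers_sorted_key)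
  have "distinct (map f (order_by f n))"
    using assms(1) by (simp add: order_by_def distinct_map atLeastLessThanSuc_atLeastAtMost del: upt_Suc)
  then show "sorted_wrt (\<lambda>x y. f x < f y) (order_by f n)"
    by (simp add: order_by_def strict_sorted_iff flip: sorted_wrt_map)
qed (use assms in \<open>auto simp: order_by_def\<close>)

lemma order_by_in_DX:
  assumes inj: "inj_on f {1..n}"
    and key: "\<And>i j k. 1 \<le> i \<Longrightarrow> i < j \<Longrightarrow> j < k \<Longrightarrow> k \<le> n \<Longrightarrow>
       (j \<in> A \<longrightarrow> \<not> (f j < f i \<and> f k < f i)) \<and> (j \<notin> A \<longrightarrow> \<not> (f k < f i \<and> f k < f j))"
  shows "order_by f n \<in> DX n A"
  using key by (auto simp: DX_def order_by_in_lin_orders prefers_order_by[OF inj])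

lemma order_by_id: "order_by (\<lambda>x. x) n = [1..<Suc n]"
  by (simp add: order_by_def del: upt_Suc)

lemma prefers_upt: "x \<in> {1..n} \<Longrightarrow> y \<in> {1..n} \<Longrightarrow> prefers [1..<Suc n] x y \<longleftrightarrow> x < y"
  using prefers_order_by[of "\<lambda>x. x" n x y] by (simp add: order_by_id)

lemma upt_in_DX: "[1..<Suc n] \<in> DX n A"
  using order_by_in_DX[of "\<lambda>x. x" n A] by (simp add: order_by_id)

(* The order 1, ..., a - 1, then the alternatives strictly between a and c outside A, then c, a,
   then those strictly between a and c in A, then c + 1, ..., n. *)
definition DX_witness_key :: "nat set \<Rightarrow> nat \<Rightarrow> nat \<Rightarrow> nat \<Rightarrow> nat \<times> nat" where
  "DX_witness_key A a c x =
     ((if x < a then 0 else if x = c then 2 else if x = a then 3 else if c < x then 5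
       else if x \<in> A then 4 else 1), x)"

definition DX_witness :: "nat set \<Rightarrow> nat \<Rightarrow> nat \<Rightarrow> nat \<Rightarrow> nat list" where
  "DX_witness A a c n = order_by (DX_witness_key A a c) n"

lemma prefers_DX_witness:
  "x \<in> {1..n} \<Longrightarrow> y \<in> {1..n} \<Longrightarrow>
    prefers (DX_witness A a c n) x y \<longleftrightarrow> DX_witness_key A a c x < DX_witness_key A a c y"
  unfolding DX_witness_def by (rule prefers_order_by) (auto simp: inj_on_def DX_witness_key_def)

lemma DX_witness_in_DX:
  assumes "a < c"
  shows "DX_witness A a c n \<in> DX n A"
  unfolding DX_witness_def
proof (rule order_by_in_DX)
  show "inj_on (DX_witness_key A a c) {1..n}"
    by (auto simp: inj_on_def DX_witness_key_def)
qed (use assms in \<open>auto simp: DX_witness_key_def less_prod_def split: if_split_asm\<close>)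

definition DX_violation :: "nat set \<Rightarrow> nat list \<Rightarrow> nat \<Rightarrow> nat \<Rightarrow> nat \<Rightarrow> bool" where
  "DX_violation A q i j k \<longleftrightarrow>
     sorted_wrt (prefers q) [k, j, i] \<or>
     j \<in> A \<and> sorted_wrt (prefers q) [j, k, i] \<or>
     j \<notin> A \<and> sorted_wrt (prefers q) [k, i, j]"

lemma DX_condition_iff_no_violation:
  assumes "i \<in> set q" "j \<in> set q" "k \<in> set q" "i \<noteq> j" "j \<noteq> k"
  shows "((j \<in> A \<longrightarrow> \<not> (prefers q j i \<and> prefers q k i)) \<and>
          (j \<notin> A \<longrightarrow> \<not> (prefers q k i \<and> prefers q k j))) \<longleftrightarrow> \<not> DX_violation A q i j k"
  using prefers_total[OF assms(1,2,4)] prefers_total[OF assms(2,3,5)]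
  by (auto simp: DX_violation_def)

lemma DX_iff_no_violation:
  "q \<in> DX n A \<longleftrightarrow>
     q \<in> lin_orders n \<and> (\<forall>i j k. 1 \<le> i \<and> i < j \<and> j < k \<and> k \<le> n \<longrightarrow> \<not> DX_violation A q i j k)"
proof -
  have "((j \<in> A \<longrightarrow> \<not> (prefers q j i \<and> prefers q k i)) \<and>
          (j \<notin> A \<longrightarrow> \<not> (prefers q k i \<and> prefers q k j))) \<longleftrightarrow> \<not> DX_violation A q i j k"
    if "q \<in> lin_orders n" "1 \<le> i" "i < j" "j < k" "k \<le> n" for i j k
    using that by (intro DX_condition_iff_no_violation) (auto simp: lin_orders_def)
  then show ?thesis
    unfolding DX_def by blast
qed

lemma DX_subset_lin_orders: "DX n A \<subseteq> lin_orders n"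
  by (auto simp: DX_def)

lemma DX_no_violation:
  "q \<in> DX n A \<Longrightarrow> 1 \<le> i \<Longrightarrow> i < j \<Longrightarrow> j < k \<Longrightarrow> k \<le> n \<Longrightarrow> \<not> DX_violation A q i j k"
  by (simp add: DX_iff_no_violation)

lemma DX_witness_ranks:
  assumes "1 \<le> a" "a < b" "b < c" "c \<le> n"
  shows "sorted_wrt (prefers [1..<Suc n]) [a, b, c]"
    and "sorted_wrt (prefers (DX_witness A b c n)) [a, c, b]"
    and "sorted_wrt (prefers (DX_witness A a b n)) [b, a, c]"
    and "sorted_wrt (prefers (DX_witness A a c n)) (if b \<in> A then [c, a, b] else [b, c, a])"
proof -
  show "sorted_wrt (prefers [1..<Suc n]) [a, b, c]"
    using assms prefers_upt[of a n b] prefers_upt[of a n c] prefers_upt[of b n c] by simp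
qed (use assms in \<open>auto simp: prefers_DX_witness DX_witness_key_def\<close>)

definition DX_triple :: "nat set \<Rightarrow> nat \<Rightarrow> nat \<Rightarrow> nat \<Rightarrow> nat list set" where
  "DX_triple A a b c = {[a, b, c], [a, c, b], [b, a, c], if b \<in> A then [c, a, b] else [b, c, a]}"

lemma restr_DX_triple:
  assumes "q \<in> DX n A" "1 \<le> a" "a < b" "b < c" "c \<le> n"
  shows "restr q {a, b, c} \<in> DX_triple A a b c"
proof -
  let ?l = "restr q {a, b, c}"
  have q: "distinct q" "set q = {1..n}" and no_violation: "\<not> DX_violation A q a b c"
    using assms by (auto simp: DX_iff_no_violation lin_orders_def)
  then have "?l \<in> {[a,b,c], [a,c,b], [b,a,c], [b,c,a], [c,a,b], [c,b,a]}"
    using assms(2-5) by (intro triple_permutations) (auto simp: restr_def)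
  moreover have "sorted_wrt (prefers q) ?l"
    by (simp add: restr_def sorted_wrt_filter sorted_wrt_prefers)
  ultimately show ?thesis
    using no_violation unfolding DX_triple_def DX_violation_def
    by (elim insertE emptyE) (simp_all split: if_split)
qed

lemma image_restr_DX:
  assumes "1 \<le> a" "a < b" "b < c" "c \<le> n"
  shows "(\<lambda>q. restr q {a, b, c}) ` DX n A = DX_triple A a b c"
proof
  show "(\<lambda>q. restr q {a, b, c}) ` DX n A \<subseteq> DX_triple A a b c"
    using restr_DX_triple assms by blast
next
  have realized: "l \<in> (\<lambda>q. restr q {a, b, c}) ` DX n A"
    if "w \<in> DX n A" "sorted_wrt (prefers w) l" "set l = {a, b, c}" for w l
  proof
    have "distinct w" "set w = {1..n}"
      using that(1) DX_subset_lin_orders by (auto simp: lin_orders_def)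
    then show "l = restr w {a, b, c}"
      using restr_sorted_eq[of w l] that(2,3) assms by auto
  qed (rule that(1))
  let ?img = "(\<lambda>q. restr q {a, b, c}) ` DX n A"
  have "[a, b, c] \<in> ?img"
    using realized[OF upt_in_DX DX_witness_ranks(1)[OF assms]] by simp
  moreover have "[a, c, b] \<in> ?img"
    using realized[OF DX_witness_in_DX DX_witness_ranks(2)[OF assms]] assms
    by (simp add: insert_commute)
  moreover have "[b, a, c] \<in> ?img"
    using realized[OF DX_witness_in_DX DX_witness_ranks(3)[OF assms]] assms
    by (simp add: insert_commute)
  moreover have "(if b \<in> A then [c, a, b] else [b, c, a]) \<in> ?img"
    using realized[OF DX_witness_in_DX DX_witness_ranks(4)[OF assms]] assms
    by (simp add: insert_commute)
  ultimately show "DX_triple A a b c \<subseteq> ?img"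
    unfolding DX_triple_def by blast
qed

lemma copious_DX: "copious n (DX n A)"
  unfolding copious_def by (auto simp: image_restr_DX DX_triple_def)

lemma peak_pit_DX: "peak_pit n (DX n A)"
  unfolding peak_pit_def
proof (intro allI impI)
  fix a b c assume abc: "1 \<le> a \<and> a < b \<and> b < c \<and> c \<le> n"
  then have "never_cond (DX n A) a b c (if b \<in> A then 1 else 3) (if b \<in> A then 3 else 1)"
    using restr_DX_triple by (fastforce simp: never_cond_def DX_triple_def)
  then show "\<exists>x\<in>{1, 2, 3}. \<exists>p\<in>{1, 3}. never_cond (DX n A) a b c x p"
    by (cases "b \<in> A") auto
qed

lemma DX_no_cycle_above_min:
  assumes "v2 \<in> DX n A" "v3 \<in> DX n A" "1 \<le> a" "a < b" "a < c" "b \<le> n" "c \<le> n"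
    and "sorted_wrt (prefers v2) [b, c, a]" "sorted_wrt (prefers v3) [c, a, b]"
  shows False
proof (cases "b < c")
  case True
  then show False
    using DX_no_violation[OF assms(1), of a b c] DX_no_violation[OF assms(2), of a b c] assms
    by (cases "b \<in> A") (simp_all add: DX_violation_def)
next
  case False
  have "distinct v2"
    using assms(1) DX_subset_lin_orders[of n A] by (auto simp: lin_orders_def)
  then have "b \<noteq> c"
    using assms(8) prefers_asym by auto
  then show False
    using False DX_no_violation[OF assms(1), of a c b] assms by (simp add: DX_violation_def)
qed

lemma DX_no_cyclic_triple: "\<not> has_cyclic_triple n (DX n A)"
proof
  assume "has_cyclic_triple n (DX n A)"
  then obtain v1 v2 v3 a b c where v: "v1 \<in> DX n A" "v2 \<in> DX n A" "v3 \<in> DX n A"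
    and abc: "a \<in> {1..n}" "b \<in> {1..n}" "c \<in> {1..n}"
    and cyc: "sorted_wrt (prefers v1) [a, b, c]" "sorted_wrt (prefers v2) [b, c, a]"
      "sorted_wrt (prefers v3) [c, a, b]"
    unfolding has_cyclic_triple_def by blast
  have "distinct v1"
    using v(1) DX_subset_lin_orders by (auto simp: lin_orders_def)
  then have "a \<noteq> b" "b \<noteq> c" "a \<noteq> c"
    using cyc(1) prefers_asym by auto
  then consider "a < b" "a < c" | "b < c" "b < a" | "c < a" "c < b"
    by linarith
  then show False
  proof cases
    case 1
    then show False using DX_no_cycle_above_min[OF v(2,3)] abc cyc by auto
  next
    case 2
    then show False using DX_no_cycle_above_min[OF v(3,1)] abc cyc by auto
  next
    case 3
    then show False using DX_no_cycle_above_min[OF v(1,2)] abc cyc by auto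
  qed
qed

lemma condorcet_DX: "condorcet_domain n (DX n A)"
  using DX_subset_lin_orders DX_no_cyclic_triple by (simp add: condorcet_domain_iff_no_cyclic_triple)

lemma DX_violation_cyclic_triple:
  assumes "DX n A \<subseteq> D" "q \<in> D" "1 \<le> i" "i < j" "j < k" "k \<le> n" "DX_violation A q i j k"
  shows "has_cyclic_triple n D"
proof -
  have ijk: "i \<in> {1..n}" "j \<in> {1..n}" "k \<in> {1..n}"
    using assms(3-6) by auto
  have identity: "[1..<Suc n] \<in> D"
    using assms(1) upt_in_DX by blast
  have swaps: "DX_witness A i j n \<in> D" "DX_witness A j k n \<in> D" "DX_witness A i k n \<in> D"
    using assms(1,4,5) DX_witness_in_DX[of i j A n] DX_witness_in_DX[of j k A n]
      DX_witness_in_DX[of i k A n] by auto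
  note ranks = DX_witness_ranks[OF assms(3-6)]
  consider "sorted_wrt (prefers q) [k, j, i]"
    | "j \<in> A" "sorted_wrt (prefers q) [j, k, i]"
    | "j \<notin> A" "sorted_wrt (prefers q) [k, i, j]"
    using assms(7) unfolding DX_violation_def by blast
  then show ?thesis
  proof cases
    case 1
    then show ?thesis
      unfolding has_cyclic_triple_def using assms(2) swaps(1,2) ranks(2,3) ijk by blast
  next
    case 2
    then have "sorted_wrt (prefers (DX_witness A i k n)) [k, i, j]"
      using ranks(4)[of A] by simp
    then show ?thesis
      unfolding has_cyclic_triple_def using 2 assms(2) identity swaps(3) ranks(1) ijk by blast
  next
    case 3
    then have "sorted_wrt (prefers (DX_witness A i k n)) [j, k, i]"
      using ranks(4)[of A] by simp
    then show ?thesis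
      unfolding has_cyclic_triple_def using 3 assms(2) identity swaps(3) ranks(1) ijk by blast
  qed
qed

lemma maximal_DX: "maximal_condorcet_domain n (DX n A)"
  unfolding maximal_condorcet_domain_def
proof (intro conjI allI impI condorcet_DX)
  fix D assume D: "condorcet_domain n D \<and> DX n A \<subseteq> D"
  have "q \<in> DX n A" if "q \<in> D" for q
  proof (rule ccontr)
    assume "q \<notin> DX n A"
    moreover have "q \<in> lin_orders n"
      using D that by (auto simp: condorcet_domain_iff_no_cyclic_triple)
    ultimately obtain i j k where "1 \<le> i" "i < j" "j < k" "k \<le> n" "DX_violation A q i j k"
      by (auto simp: DX_iff_no_violation)
    then have "has_cyclic_triple n D"
      using DX_violation_cyclic_triple D that by blast
    then show False
      using D by (simp add: condorcet_domain_iff_no_cyclic_triple)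
  qed
  then show "D = DX n A"
    using D by blast
qed

theorem proposition1:
  fixes n :: nat and A :: "nat set"
  assumes "n \<ge> 1" and "A \<subseteq> {1..n}"
  shows "copious n (DX n A) \<and> peak_pit n (DX n A) \<and> maximal_condorcet_domain n (DX n A)"
  using copious_DX peak_pit_DX maximal_DX by blast

end
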